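(* Let $Y\subset\mathbb{R}^n$ be open and let $\omega\colon Y\to\mathbb{R}^n$, $f\colon Y\to\mathbb{R}^n$, $F\colon Y\to\mathbb{R}$ and $f^{\mathrm{num}}\colon Y\times Y\to\mathbb{R}^n$ be arbitrary functions with $f^{\mathrm{num}}(u,u)=f(u)$ for all $u\in Y$. (No further relation between $\omega,f,F$ and no convexity is assumed.) Then the following are equivalent: (A) there exists $F^{\mathrm{num}}\colon Y\times Y\to\mathbb{R}$ with $F^{\mathrm{num}}(u,u)=F(u)$ for all $u\in Y$ such that for all $u_-,u_0,u_+\in Y$, $$\omega(u_0)\cdot\big(f^{\mathrm{num}}(u_0,u_+)-f^{\mathrm{num}}(u_-,u_0)\big)\ \ge\ F^{\mathrm{num}}(u_0,u_+)-F^{\mathrm{num}}(u_-,u_0);$$ (B) for all $u_-,u_+\in Y$, $$\big(\omega(u_+)-\omega(u_-)\big)\cdot f^{\mathrm{num}}(u_-,u_+)\ \le\ \big(\omega(u_+)\cdot f(u_+)-F(u_+)\big)-\big(\omega(u_-)\cdot f(u_-)-F(u_-)\big).$$ Moreover, there exists a consistent $F^{\mathrm{num}}$ for which (A) holds with equality for all triples if and only if (B) holds with equality for all pairs; and in that case $F^{\mathrm{num}}$ is uniquely determined by $$F^{\mathrm{num}}(u_-,u_+)=\{\{F\}\}+\{\{\omega\}\}\cdot f^{\mathrm{num}}(u_-,u_+)-\{\{\omega\cdot f\}\}.$$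
   Context: For a function $a$ on $Y$ and states $u_-,u_+$, write $a_\pm=a(u_\pm)$, the mean $\{\{a\}\}=\tfrac12(a_-+a_+)$ and the jump $[\![a]\!]=a_+-a_-$. *)

theory Defs
  imports "HOL-Analysis.Analysis"
begin

end

theory Submission
  imports Defs
begin

text \<open>Write \<open>\<psi> = \<omega> \<bullet> f - F\<close> for the entropy potential. For any consistent numerical
  entropy flux, the cell entropy productions on the degenerate triples \<open>(u\<^sub>-, u\<^sub>-, u\<^sub>+)\<close>
  and \<open>(u\<^sub>-, u\<^sub>+, u\<^sub>+)\<close> add up to Tadmor's defect \<open>[\<psi>] - [\<omega>] \<bullet> fnum(u\<^sub>-, u\<^sub>+)\<close>,
  so (A) implies (B). Conversely, for the flux \<open>F(u\<^sub>-) + \<omega>(u\<^sub>-) \<bullet> (fnum(u\<^sub>-, u\<^sub>+) - f(u\<^sub>-))\<close>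
  the production on \<open>(u\<^sub>-, u\<^sub>0, u\<^sub>+)\<close> equals the defect of the pair \<open>(u\<^sub>-, u\<^sub>0)\<close>, so (B)
  implies (A). Both arguments only use that the sign condition is closed under addition,
  hence cover inequalities and equalities at once. If the production vanishes on
  \<open>(u\<^sub>-, u\<^sub>-, u\<^sub>+)\<close> the flux must be the one above, which exceeds the mean-value formula
  by half the defect.\<close>

locale numerical_flux =
  fixes Y :: "'s set"
    and \<omega> f :: "'s \<Rightarrow> 'a::real_inner"
    and F :: "'s \<Rightarrow> real"
    and fnum :: "'s \<Rightarrow> 's \<Rightarrow> 'a"
  assumes fnum_consistent: "u \<in> Y \<Longrightarrow> fnum u u = f u"
begin

definition entropy_production :: "('s \<Rightarrow> 's \<Rightarrow> real) \<Rightarrow> 's \<Rightarrow> 's \<Rightarrow> 's \<Rightarrow> real" where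
  "entropy_production Fnum um u0 up =
     \<omega> u0 \<bullet> (fnum u0 up - fnum um u0) - (Fnum u0 up - Fnum um u0)"

definition entropy_potential :: "'s \<Rightarrow> real" where
  "entropy_potential u = \<omega> u \<bullet> f u - F u"

definition tadmor_defect :: "'s \<Rightarrow> 's \<Rightarrow> real" where
  "tadmor_defect um up =
     entropy_potential up - entropy_potential um - (\<omega> up - \<omega> um) \<bullet> fnum um up"

definition canonical_entropy_flux :: "'s \<Rightarrow> 's \<Rightarrow> real" where
  "canonical_entropy_flux um up = F um + \<omega> um \<bullet> (fnum um up - f um)"

definition mean_entropy_flux :: "'s \<Rightarrow> 's \<Rightarrow> real" where
  "mean_entropy_flux um up = (F um + F up) / 2 + ((\<omega> um + \<omega> up) /\<^sub>R 2) \<bullet> fnum um up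
     - (\<omega> um \<bullet> f um + \<omega> up \<bullet> f up) / 2"

lemma canonical_entropy_flux_diag: "u \<in> Y \<Longrightarrow> canonical_entropy_flux u u = F u"
  by (simp add: canonical_entropy_flux_def fnum_consistent)

lemma entropy_production_canonical:
  "entropy_production canonical_entropy_flux um u0 up = tadmor_defect um u0"
  by (simp add: entropy_production_def tadmor_defect_def entropy_potential_def
      canonical_entropy_flux_def inner_diff_left inner_diff_right)

lemma canonical_entropy_flux_eq_mean:
  "canonical_entropy_flux um up = mean_entropy_flux um up + tadmor_defect um up / 2"
  by (simp add: canonical_entropy_flux_def mean_entropy_flux_def tadmor_defect_def
      entropy_potential_def inner_diff_left inner_diff_right inner_add_left field_simps)

lemma entropy_production_left_degenerate:
  assumes "um \<in> Y" "Fnum um um = F um"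
  shows "entropy_production Fnum um um up = canonical_entropy_flux um up - Fnum um up"
  using assms by (simp add: entropy_production_def canonical_entropy_flux_def fnum_consistent)

lemma tadmor_defect_eq_degenerate_productions:
  assumes "um \<in> Y" "up \<in> Y" "Fnum um um = F um" "Fnum up up = F up"
  shows "tadmor_defect um up =
           entropy_production Fnum um um up + entropy_production Fnum um up up"
  using assms
  by (simp add: entropy_production_left_degenerate entropy_production_def tadmor_defect_def
      entropy_potential_def canonical_entropy_flux_def fnum_consistent
      inner_diff_left inner_diff_right)

lemma consistent_entropy_flux_exists_iff:
  assumes P_add: "\<And>x y. P x \<Longrightarrow> P y \<Longrightarrow> P (x + y)"
  shows "(\<exists>Fnum. (\<forall>u\<in>Y. Fnum u u = F u) \<and>
            (\<forall>um\<in>Y. \<forall>u0\<in>Y. \<forall>up\<in>Y. P (entropy_production Fnum um u0 up)))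
         \<longleftrightarrow> (\<forall>um\<in>Y. \<forall>up\<in>Y. P (tadmor_defect um up))"
proof
  assume "\<exists>Fnum. (\<forall>u\<in>Y. Fnum u u = F u) \<and>
            (\<forall>um\<in>Y. \<forall>u0\<in>Y. \<forall>up\<in>Y. P (entropy_production Fnum um u0 up))"
  then obtain Fnum where diag: "\<forall>u\<in>Y. Fnum u u = F u"
    and prod: "\<forall>um\<in>Y. \<forall>u0\<in>Y. \<forall>up\<in>Y. P (entropy_production Fnum um u0 up)"
    by blast
  show "\<forall>um\<in>Y. \<forall>up\<in>Y. P (tadmor_defect um up)"
  proof (intro ballI)
    fix um up assume "um \<in> Y" "up \<in> Y"
    with diag prod show "P (tadmor_defect um up)"
      by (simp add: tadmor_defect_eq_degenerate_productions[of um up Fnum] P_add)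
  qed
next
  assume "\<forall>um\<in>Y. \<forall>up\<in>Y. P (tadmor_defect um up)"
  then show "\<exists>Fnum. (\<forall>u\<in>Y. Fnum u u = F u) \<and>
            (\<forall>um\<in>Y. \<forall>u0\<in>Y. \<forall>up\<in>Y. P (entropy_production Fnum um u0 up))"
    by (metis canonical_entropy_flux_diag entropy_production_canonical)
qed

lemma conservative_entropy_flux_unique:
  assumes "um \<in> Y" "up \<in> Y" "Fnum um um = F um" "Fnum up up = F up"
    and "entropy_production Fnum um um up = 0" "entropy_production Fnum um up up = 0"
  shows "Fnum um up = mean_entropy_flux um up"
proof -
  have "Fnum um up = canonical_entropy_flux um up"
    using assms entropy_production_left_degenerate by fastforce
  moreover have "tadmor_defect um up = 0"
    using assms tadmor_defect_eq_degenerate_productions[of um up Fnum] by simp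
  ultimately show ?thesis
    by (simp add: canonical_entropy_flux_eq_mean)
qed

end

theorem mainTheorem1:
  fixes Y :: "(real ^ 'n) set"
    and \<omega> f :: "real ^ 'n \<Rightarrow> real ^ 'n"
    and F :: "real ^ 'n \<Rightarrow> real"
    and fnum :: "real ^ 'n \<Rightarrow> real ^ 'n \<Rightarrow> real ^ 'n"
  assumes "open Y"
    and "\<And>u. u \<in> Y \<Longrightarrow> fnum u u = f u"
  shows "((\<exists>Fnum :: real ^ 'n \<Rightarrow> real ^ 'n \<Rightarrow> real.
              (\<forall>u\<in>Y. Fnum u u = F u) \<and>
              (\<forall>um\<in>Y. \<forall>u0\<in>Y. \<forall>up\<in>Y.
                 \<omega> u0 \<bullet> (fnum u0 up - fnum um u0) \<ge> Fnum u0 up - Fnum um u0))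
          \<longleftrightarrow>
          (\<forall>um\<in>Y. \<forall>up\<in>Y.
             (\<omega> up - \<omega> um) \<bullet> fnum um up
               \<le> (\<omega> up \<bullet> f up - F up) - (\<omega> um \<bullet> f um - F um)))
       \<and>
       ((\<exists>Fnum :: real ^ 'n \<Rightarrow> real ^ 'n \<Rightarrow> real.
              (\<forall>u\<in>Y. Fnum u u = F u) \<and>
              (\<forall>um\<in>Y. \<forall>u0\<in>Y. \<forall>up\<in>Y.
                 \<omega> u0 \<bullet> (fnum u0 up - fnum um u0) = Fnum u0 up - Fnum um u0))
          \<longleftrightarrow>
          (\<forall>um\<in>Y. \<forall>up\<in>Y.
             (\<omega> up - \<omega> um) \<bullet> fnum um up
               = (\<omega> up \<bullet> f up - F up) - (\<omega> um \<bullet> f um - F um)))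
       \<and>
       (\<forall>Fnum :: real ^ 'n \<Rightarrow> real ^ 'n \<Rightarrow> real.
          ((\<forall>u\<in>Y. Fnum u u = F u) \<and>
           (\<forall>um\<in>Y. \<forall>u0\<in>Y. \<forall>up\<in>Y.
              \<omega> u0 \<bullet> (fnum u0 up - fnum um u0) = Fnum u0 up - Fnum um u0))
          \<longrightarrow> (\<forall>um\<in>Y. \<forall>up\<in>Y.
                 Fnum um up = (F um + F up) / 2
                   + ((\<omega> um + \<omega> up) /\<^sub>R 2) \<bullet> fnum um up
                   - (\<omega> um \<bullet> f um + \<omega> up \<bullet> f up) / 2))"
proof -
  interpret numerical_flux Y \<omega> f F fnum
    using assms(2) by unfold_locales
  show ?thesis
    apply (intro conjI allI impI)
    subgoal
      using consistent_entropy_flux_exists_iff[of "\<lambda>x. 0 \<le> x"]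
      by (simp add: entropy_production_def tadmor_defect_def entropy_potential_def)
    subgoal
      using consistent_entropy_flux_exists_iff[of "\<lambda>x. x = 0"]
      by (simp add: entropy_production_def tadmor_defect_def entropy_potential_def)
        (metis (no_types, lifting))
    subgoal for Fnum
      using conservative_entropy_flux_unique[of _ _ Fnum]
      unfolding entropy_production_def mean_entropy_flux_def
      by (metis diff_self)
    done
qed

end
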